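(* Consider the discrete-time system $x(t+1) = A x(t) + B u(t)$ with $A \in \mathbb{R}^{d_x \times d_x}$, $B \in \mathbb{R}^{d_x \times d_u}$, control constraint $\mathcal U = \{u \in \mathbb{R}^{d_u} \mid \underline u \leq u \leq \overline u\}$ (with $\underline u \leq \overline u$) and state constraint $\mathcal X = \{x \in \mathbb{R}^{d_x} \mid \underline x \leq x \leq \overline x\}$. Let $T \geq 0$ be an integer. Let $G_{\mathcal I} \in \mathbb{R}^{d_x\times n_{\mathcal I}}$, $\alpha \in \mathbb{R}^{d_x}$, $\gamma\in\mathbb{R}^{n_{\mathcal I}}$ with $\gamma \geq 0$, $\Gamma = \mathrm{diag}(\gamma)$, $\mathcal I = \langle \alpha \mid G_{\mathcal I}\Gamma\rangle$, and let $\beta(t) \in \mathbb{R}^{d_u}$, $\Phi(t) \in \mathbb{R}^{d_u \times n_{\mathcal I}}$ for $t = 0,\ldots,T-1$. Suppose that for all $t = 0,\ldots,T$ \[ A^t\alpha + \sum_{s=0}^{t-1}A^{t-1-s}B\beta(s) - \Big|A^tG_{\mathcal I}\Gamma + \sum_{s=0}^{t-1}A^{t-1-s}B\Phi(s)\Big|\mathbf{1}_{n_{\mathcal I}} \geq \underline x, \] \[ A^t\alpha + \sum_{s=0}^{t-1}A^{t-1-s}B\beta(s) + \Big|A^tG_{\mathcal I}\Gamma + \sum_{s=0}^{t-1}A^{t-1-s}B\Phi(s)\Big|\mathbf{1}_{n_{\mathcal I}} \leq \overline x, \] and that for all $t = 0,\ldots,T-1$ \[ \beta(t) - |\Phi(t)|\mathbf{1}_{n_{\mathcal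 I}} \geq \underline u, \qquad \beta(t) + |\Phi(t)|\mathbf{1}_{n_{\mathcal I}} \leq \overline u. \] Then $\mathcal I \subseteq \mathrm{Viab}_{[0,T]}(\mathcal X)$, where $\mathrm{Viab}_{[0,T]}(\mathcal X)$ is the set of $x(0) \in \mathcal X$ for which there exists an input signal with $u(t) \in \mathcal U$ for $t = 0,\ldots,T$ such that the resulting trajectory satisfies $x(t)\in\mathcal X$ for all $t = 0,\ldots,T$.
   Context: Vector inequalities are elementwise; $|M|$ is the elementwise absolute value; $\mathbf{1}_n$ is the all-ones vector in $\mathbb{R}^n$. The notation $\langle c \mid G\rangle$ denotes the zonotope $\{c + G\lambda : \lambda \in [-1,1]^n\}$. $\mathrm{diag}(\gamma)$ is the diagonal matrix with $\gamma$ on its diagonal. *)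

theory Defs
  imports "HOL-Analysis.Analysis"
begin

text \<open>Vectors in R^d are real^'d; a d1 x d2 matrix is real^'d2^'d1 (rows indexed by 'd1).
  Vector inequalities use the library's componentwise order on vec.\<close>

fun mat_pow :: "real^'n^'n \<Rightarrow> nat \<Rightarrow> real^'n^'n" where
  "mat_pow A 0 = mat 1"
| "mat_pow A (Suc k) = A ** mat_pow A k"

definition mat_abs :: "real^'n^'m \<Rightarrow> real^'n^'m" where
  "mat_abs M = (\<chi> i j. \<bar>M $ i $ j\<bar>)"

definition diag_mat :: "real^'n \<Rightarrow> real^'n^'n" where
  "diag_mat g = (\<chi> i j. if i = j then g $ i else 0)"

definition ones_vec :: "real^'n" where
  "ones_vec = (\<chi> i. 1)"

definition zonotope :: "real^'m \<Rightarrow> real^'n^'m \<Rightarrow> (real^'m) set" where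
  "zonotope c G = {c + G *v l | l. \<forall>i. -1 \<le> l $ i \<and> l $ i \<le> 1}"

fun traj :: "real^'x^'x \<Rightarrow> real^'u^'x \<Rightarrow> real^'x \<Rightarrow> (nat \<Rightarrow> real^'u) \<Rightarrow> nat \<Rightarrow> real^'x" where
  "traj A B x0 u 0 = x0"
| "traj A B x0 u (Suc t) = A *v traj A B x0 u t + B *v u t"

definition viab ::
  "real^'x^'x \<Rightarrow> real^'u^'x \<Rightarrow> real^'u \<Rightarrow> real^'u \<Rightarrow> real^'x \<Rightarrow> real^'x \<Rightarrow> nat \<Rightarrow> (real^'x) set" where
  "viab A B ulo uhi xlo xhi T =
     {x0. xlo \<le> x0 \<and> x0 \<le> xhi \<and>
          (\<exists>u :: nat \<Rightarrow> real^'u. (\<forall>t\<le>T. ulo \<le> u t \<and> u t \<le> uhi) \<and>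
               (\<forall>t\<le>T. xlo \<le> traj A B x0 u t \<and> traj A B x0 u t \<le> xhi))}"

end

theory Submission
  imports Defs
begin

text \<open>A point of the zonotope is \<open>\<alpha> + G \<Gamma> \<lambda>\<close> with \<open>\<lambda> \<in> [-1,1]\<^sup>n\<close>. Feeding the
  affine feedback \<open>u(t) = \<beta>(t) + \<Phi>(t) \<lambda>\<close> into the variation-of-constants formula makes
  \<open>x(t)\<close> an affine function of the same \<open>\<lambda>\<close>, i.e. a point of the zonotope whose centre and
  generator matrix appear in the hypotheses; likewise \<open>u(t)\<close> lies in the zonotope
  \<open>\<langle>\<beta>(t) | \<Phi>(t)\<rangle>\<close>. A zonotope \<open>\<langle>c | M\<rangle>\<close> lies in the box \<open>[c - |M| 1, c + |M| 1]\<close>,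
  so the hypotheses give the state and input constraints.\<close>

lemma matrix_vector_mult_sum_rdistrib:
  fixes M :: "'a \<Rightarrow> real^'n^'m"
  shows "(\<Sum>s\<in>S. M s) *v x = (\<Sum>s\<in>S. M s *v x)"
  by (induction S rule: infinite_finite_induct) (auto simp: matrix_vector_mult_add_rdistrib)

lemma matrix_vector_mult_sum_ldistrib:
  fixes M :: "real^'n^'m"
  shows "M *v (\<Sum>s\<in>S. x s) = (\<Sum>s\<in>S. M *v x s)"
  by (simp add: linear_sum matrix_vector_mul_linear)

lemma abs_matrix_vector_mult_le:
  fixes M :: "real^'n^'m"
  assumes "\<forall>j. \<bar>l $ j\<bar> \<le> 1"
  shows "\<bar>(M *v l) $ i\<bar> \<le> (mat_abs M *v ones_vec) $ i"
proof -
  have "\<bar>(M *v l) $ i\<bar> \<le> (\<Sum>j\<in>UNIV. \<bar>M $ i $ j * l $ j\<bar>)"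
    unfolding matrix_vector_mult_def by (simp add: sum_abs)
  also have "\<dots> \<le> (\<Sum>j\<in>UNIV. \<bar>M $ i $ j\<bar>)"
    by (rule sum_mono) (use assms in \<open>simp add: abs_mult mult_left_le\<close>)
  also have "\<dots> = (mat_abs M *v ones_vec) $ i"
    by (simp add: matrix_vector_mult_def mat_abs_def ones_vec_def)
  finally show ?thesis .
qed

lemma zonotope_subset_box:
  fixes M :: "real^'n^'m"
  assumes "lo \<le> c - mat_abs M *v ones_vec" and "c + mat_abs M *v ones_vec \<le> hi"
  shows "zonotope c M \<subseteq> {lo..hi}"
proof
  fix x assume "x \<in> zonotope c M"
  then obtain l where x: "x = c + M *v l" and l: "\<forall>j. \<bar>l $ j\<bar> \<le> 1"
    unfolding zonotope_def by (auto simp: abs_le_iff)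
  have "lo $ i \<le> x $ i \<and> x $ i \<le> hi $ i" for i
  proof -
    have "lo $ i \<le> c $ i - (mat_abs M *v ones_vec) $ i" "c $ i + (mat_abs M *v ones_vec) $ i \<le> hi $ i"
      using assms by (simp_all add: less_eq_vec_def)
    with abs_matrix_vector_mult_le[OF l, of M i] show ?thesis
      by (simp add: x abs_le_iff)
  qed
  then show "x \<in> {lo..hi}"
    by (simp add: less_eq_vec_def)
qed

lemma traj_variation_of_constants:
  "traj A B x0 u t = mat_pow A t *v x0 + (\<Sum>s<t. (mat_pow A (t - 1 - s) ** B) *v u s)"
proof (induction t)
  case 0
  then show ?case by (simp add: matrix_vector_mul_lid)
next
  case (Suc t)
  have mat_pow_diff: "mat_pow A (t - s) = A ** mat_pow A (t - Suc s)" if "s < t" for s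
    using that by (metis Suc_diff_Suc mat_pow.simps(2))
  have "(\<Sum>s<t. (mat_pow A (Suc t - 1 - s) ** B) *v u s)
      = A *v (\<Sum>s<t. (mat_pow A (t - 1 - s) ** B) *v u s)"
    unfolding matrix_vector_mult_sum_ldistrib
    by (intro sum.cong) (simp_all add: mat_pow_diff matrix_vector_mul_assoc matrix_mul_assoc)
  then show ?case
    by (simp add: Suc matrix_vector_right_distrib matrix_vector_mul_assoc matrix_mul_lid)
qed

lemma traj_affine_feedback:
  assumes "\<And>s. s < t \<Longrightarrow> u s = \<beta> s + \<Phi> s *v l"
  shows "traj A B (\<alpha> + G *v l) u t
    = (mat_pow A t *v \<alpha> + (\<Sum>s<t. (mat_pow A (t - 1 - s) ** B) *v \<beta> s))
      + (mat_pow A t ** G + (\<Sum>s<t. mat_pow A (t - 1 - s) ** B ** \<Phi> s)) *v l"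
  by (simp add: traj_variation_of_constants assms matrix_vector_right_distrib
      matrix_vector_mult_add_rdistrib matrix_vector_mult_sum_rdistrib sum.distrib
      matrix_vector_mul_assoc)

theorem proposition5p2:
  fixes A :: "real^'x^'x" and B :: "real^'u^'x"
    and ulo uhi :: "real^'u" and xlo xhi :: "real^'x"
    and T :: nat
    and G :: "real^'n^'x" and \<alpha> :: "real^'x" and \<gamma> :: "real^'n"
    and \<beta> :: "nat \<Rightarrow> real^'u" and \<Phi> :: "nat \<Rightarrow> real^'n^'u"
  assumes "ulo \<le> uhi"
    and "\<gamma> \<ge> 0"
    and "\<forall>t\<le>T.
           mat_pow A t *v \<alpha> + (\<Sum>s<t. (mat_pow A (t - 1 - s) ** B) *v \<beta> s)
           - mat_abs (mat_pow A t ** G ** diag_mat \<gamma> + (\<Sum>s<t. mat_pow A (t - 1 - s) ** B ** \<Phi> s))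
               *v ones_vec \<ge> xlo"
    and "\<forall>t\<le>T.
           mat_pow A t *v \<alpha> + (\<Sum>s<t. (mat_pow A (t - 1 - s) ** B) *v \<beta> s)
           + mat_abs (mat_pow A t ** G ** diag_mat \<gamma> + (\<Sum>s<t. mat_pow A (t - 1 - s) ** B ** \<Phi> s))
               *v ones_vec \<le> xhi"
    and "\<forall>t<T. \<beta> t - mat_abs (\<Phi> t) *v ones_vec \<ge> ulo \<and> \<beta> t + mat_abs (\<Phi> t) *v ones_vec \<le> uhi"
  shows "zonotope \<alpha> (G ** diag_mat \<gamma>) \<subseteq> viab A B ulo uhi xlo xhi T"
proof
  fix x0 assume "x0 \<in> zonotope \<alpha> (G ** diag_mat \<gamma>)"
  then obtain l where x0: "x0 = \<alpha> + (G ** diag_mat \<gamma>) *v l" and l: "\<forall>i. -1 \<le> l $ i \<and> l $ i \<le> 1"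
    unfolding zonotope_def by blast
  have in_zonotope: "c + M *v l \<in> zonotope c M" for c M
    using l unfolding zonotope_def by blast
  \<comment> \<open>\<open>viab\<close> also constrains \<open>u(T)\<close>, which no state depends on; any admissible input will do.\<close>
  define u where "u t = (if t < T then \<beta> t + \<Phi> t *v l else ulo)" for t
  have u_in_U: "u t \<in> {ulo..uhi}" if "t \<le> T" for t
  proof (cases "t < T")
    case True
    then have "zonotope (\<beta> t) (\<Phi> t) \<subseteq> {ulo..uhi}"
      using assms(5) by (intro zonotope_subset_box) auto
    then have "\<beta> t + \<Phi> t *v l \<in> {ulo..uhi}"
      using in_zonotope by (rule subsetD)
    with True show ?thesis
      by (simp add: u_def)
  qed (use assms(1) in \<open>simp add: u_def\<close>)
  have traj_in_X: "traj A B x0 u t \<in> {xlo..xhi}" if "t \<le> T" for t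
  proof -
    let ?c = "mat_pow A t *v \<alpha> + (\<Sum>s<t. (mat_pow A (t - 1 - s) ** B) *v \<beta> s)"
    let ?M = "mat_pow A t ** G ** diag_mat \<gamma> + (\<Sum>s<t. mat_pow A (t - 1 - s) ** B ** \<Phi> s)"
    have "traj A B x0 u t = ?c
        + (mat_pow A t ** (G ** diag_mat \<gamma>) + (\<Sum>s<t. mat_pow A (t - 1 - s) ** B ** \<Phi> s)) *v l"
      unfolding x0 by (rule traj_affine_feedback) (use that in \<open>simp add: u_def\<close>)
    also have "\<dots> = ?c + ?M *v l"
      by (simp only: matrix_mul_assoc)
    finally have "traj A B x0 u t = ?c + ?M *v l" .
    moreover have "zonotope ?c ?M \<subseteq> {xlo..xhi}"
      using assms(3,4) that by (intro zonotope_subset_box) auto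
    ultimately show ?thesis
      using in_zonotope[of ?c ?M] by auto
  qed
  show "x0 \<in> viab A B ulo uhi xlo xhi T"
    using u_in_U traj_in_X traj_in_X[of 0] unfolding viab_def by auto
qed

end
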